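(* Let $G$ be a simple connected graph with $n$ vertices and $m$ edges, let $k>2$ and $r\ge1$ be integers, and let $S_k^r(G)$ be the $r$-th iterated $k$-parallel subdivision graph of $G$. Then $$Kf^*(S_k^r(G))=(8k)^rKf^*(G)+\frac{(2k)^r(4^r-1)}{3}(m-2mn)+\frac{k(4k)^r(k^r-2^r)}{k-2}m^2-\frac{k(2k)^r\big[4^r-2k(4^r-1)+3(2k)^r-4\big]}{3(k-2)(2k-1)}m^2.$$
   Context: The $k$-parallel subdivision graph $S_k(H)$ of a graph $H$ is obtained by replacing each edge $uv$ of $H$ by $k$ internally disjoint paths $u-w-v$ of length $2$ (each with its own new middle vertex). Iterates: $S_k^0(G)=G$ and $S_k^r(G)=S_k(S_k^{r-1}(G))$. For a connected graph $H$, the multiplicative degree Kirchhoff index is $Kf^*(H)=\sum_{\{a,b\}\subseteq V(H)} d_a d_b\,\Omega_{ab}(H)$, where the sum is over unordered pairs of distinct vertices, $d_a$ is the degree of $a$, and $\Omega_{ab}(H)$ is the resistance distance (effective resistance with unit resistors on the edges); equivalently $Kf^*(H)=2|E(H)|\sum_{i\ge2}1/\lambda_i$ where $0=\lambda_1<\lambda_2\le\dots$ are the eigenvalues of the normalized Laplacian $I-D^{-1/2}AD^{-1/2}$ of $H$. *)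

theory Defs
  imports Complex_Main "HOL-Library.Product_Lexorder"
begin

text \<open>A finite simple graph is represented as a pair (n, E): the vertex set is
  {0..<n} and every edge {u,v} is stored exactly once as the pair (u,v) with u < v.\<close>

type_synonym graph = "nat \<times> (nat \<times> nat) set"

definition simple_graph :: "graph \<Rightarrow> bool" where
  "simple_graph G \<longleftrightarrow> (\<forall>(u,v)\<in>snd G. u < v \<and> v < fst G)"

definition adj :: "graph \<Rightarrow> nat \<Rightarrow> nat \<Rightarrow> bool" where
  "adj G i j \<longleftrightarrow> (i, j) \<in> snd G \<or> (j, i) \<in> snd G"

definition nbrs :: "graph \<Rightarrow> nat \<Rightarrow> nat set" where
  "nbrs G i = {j. j < fst G \<and> adj G i j}"

definition deg :: "graph \<Rightarrow> nat \<Rightarrow> nat" where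
  "deg G i = card (nbrs G i)"

definition num_edges :: "graph \<Rightarrow> nat" where
  "num_edges G = card (snd G)"

definition connected_graph :: "graph \<Rightarrow> bool" where
  "connected_graph G \<longleftrightarrow> 0 < fst G \<and> (\<forall>a < fst G. \<forall>b < fst G. (adj G)\<^sup>*\<^sup>* a b)"

definition lap_apply :: "graph \<Rightarrow> (nat \<Rightarrow> real) \<Rightarrow> nat \<Rightarrow> real" where
  "lap_apply G x i = real (deg G i) * x i - (\<Sum>j\<in>nbrs G i. x j)"

text \<open>Resistance distance (unit resistors): the potential difference x_a - x_b when a
  unit current enters at a and leaves at b, i.e. L x = e_a - e_b.\<close>
definition resistance :: "graph \<Rightarrow> nat \<Rightarrow> nat \<Rightarrow> real" where
  "resistance G a b = (THE \<omega>. \<exists>x. (\<forall>i < fst G. lap_apply G x i =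
       (if i = a then 1 else 0) - (if i = b then 1 else 0)) \<and> \<omega> = x a - x b)"

definition kf_star :: "graph \<Rightarrow> real" where
  "kf_star G = (\<Sum>a < fst G. \<Sum>b \<in> {a<..<fst G}.
      real (deg G a) * real (deg G b) * resistance G a b)"

text \<open>k-parallel subdivision: the j-th edge (u,v) (in sorted order) is replaced by k paths
  u - w - v with fresh middle vertices w = n + j*k + c, c < k.\<close>
definition par_subdiv :: "nat \<Rightarrow> graph \<Rightarrow> graph" where
  "par_subdiv k G = (let n = fst G; es = sorted_list_of_set (snd G) in
     (n + k * length es,
      {(fst (es ! j), n + j * k + c) | j c. j < length es \<and> c < k} \<union>
      {(snd (es ! j), n + j * k + c) | j c. j < length es \<and> c < k}))"

end

theory Submission
  imports Defs "Jordan_Normal_Form.Determinant"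
begin

text \<open>Resistances are read off a Green's function \<open>Z\<close> of the Laplacian grounded at vertex \<open>0\<close>
  (\<open>L Z\<^sub>u = e\<^sub>u - e\<^sub>0\<close>), which gives
  \<open>Kf\<^sup>*(G) = 2m \<Sum>\<^sub>u d\<^sub>u Z\<^sub>u\<^sub>u - \<Sum>\<^sub>u\<^sub>,\<^sub>v d\<^sub>u d\<^sub>v Z\<^sub>u\<^sub>v\<close>.
  A Green's function of \<open>S\<^sub>k(G)\<close> is written down explicitly in terms of \<open>Z\<close>, and evaluating
  the formula with it gives the recurrence
  \<open>Kf\<^sup>*(S\<^sub>k G) = 8k Kf\<^sup>*(G) + 2km - 4kmn + 4k\<^sup>2m\<^sup>2\<close>, while \<open>S\<^sub>k(G)\<close> has
  \<open>n + km\<close> vertices and \<open>2km\<close> edges. Solving the recurrence gives the closed form.\<close>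

section \<open>Graphs and their Laplacian\<close>

lemma sum_upper_triangle_eq_half:
  fixes F :: "nat \<Rightarrow> nat \<Rightarrow> real"
  assumes sym: "\<And>a b. F a b = F b a" and diag: "\<And>a. F a a = 0"
  shows "(\<Sum>a<n. \<Sum>b\<in>{a<..<n}. F a b) = (\<Sum>a<n. \<Sum>b<n. F a b) / 2"
proof (induction n)
  case (Suc n)
  have "{a<..<Suc n} = insert n {a<..<n}" if "a < n" for a
    using that by auto
  then have "(\<Sum>a<n. \<Sum>b\<in>{a<..<Suc n}. F a b) = (\<Sum>a<n. (\<Sum>b\<in>{a<..<n}. F a b) + F a n)"
    by (intro sum.cong) (auto simp: add.commute)
  moreover have "{n<..<Suc n} = {}"
    by auto
  moreover have "(\<Sum>a<Suc n. \<Sum>b<Suc n. F a b) = (\<Sum>a<n. \<Sum>b<n. F a b) + 2 * (\<Sum>a<n. F a n)"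
    using sym diag by (simp add: sum.distrib)
  ultimately show ?case
    using Suc by (simp add: sum.distrib)
qed simp

lemma sum_lessThan_add:
  fixes f :: "nat \<Rightarrow> 'a::comm_monoid_add"
  shows "(\<Sum>t<n + q. f t) = (\<Sum>t<n. f t) + (\<Sum>i<q. f (n + i))"
  by (induction q) (auto simp: add.assoc)

lemma sum_lessThan_mult:
  fixes g :: "nat \<Rightarrow> 'a::comm_monoid_add"
  shows "(\<Sum>i<m * k. g i) = (\<Sum>j<m. \<Sum>c<k. g (j * k + c))"
proof (induction m)
  case (Suc m)
  have "(\<Sum>i<Suc m * k. g i) = (\<Sum>i<m * k + k. g i)"
    by (simp add: add.commute)
  then show ?case
    using Suc by (simp add: sum_lessThan_add)
qed simp

lemma lap_apply_add:
  "lap_apply G (\<lambda>i. x i + y i) u = lap_apply G x u + lap_apply G y u"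
  unfolding lap_apply_def by (simp add: sum.distrib algebra_simps)

lemma lap_apply_scale:
  "lap_apply G (\<lambda>i. c * x i) u = c * lap_apply G x u"
  unfolding lap_apply_def by (simp add: sum_distrib_left algebra_simps)

lemma lap_apply_diff:
  "lap_apply G (\<lambda>i. x i - y i) u = lap_apply G x u - lap_apply G y u"
  unfolding lap_apply_def by (simp add: sum_subtractf algebra_simps)

locale finite_simple_graph =
  fixes n :: nat and E :: "(nat \<times> nat) set"
  assumes simple: "simple_graph (n, E)"
begin

lemma edge_bounds: "(u, v) \<in> E \<Longrightarrow> u < v \<and> v < n"
  using simple unfolding simple_graph_def by auto

lemma finite_edges: "finite E"
proof (rule finite_subset)
  show "E \<subseteq> {..<n} \<times> {..<n}"
    using edge_bounds by fastforce
qed simp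

definition edge_list :: "(nat \<times> nat) list" where
  "edge_list = sorted_list_of_set E"

definition m :: nat where
  "m = length edge_list"

definition lo :: "nat \<Rightarrow> nat" where
  "lo j = fst (edge_list ! j)"

definition hi :: "nat \<Rightarrow> nat" where
  "hi j = snd (edge_list ! j)"

lemma m_eq_card: "m = card E"
  using finite_edges by (simp add: m_def edge_list_def)

lemma set_edge_list: "set edge_list = E"
  using finite_edges by (simp add: edge_list_def)

lemma edge_in_E: "j < m \<Longrightarrow> (lo j, hi j) \<in> E"
  using set_edge_list by (auto simp: lo_def hi_def m_def)

lemma lo_less_hi: "j < m \<Longrightarrow> lo j < hi j"
  using edge_in_E edge_bounds by blast

lemma hi_less: "j < m \<Longrightarrow> hi j < n"
  using edge_in_E edge_bounds by blast

lemma lo_less: "j < m \<Longrightarrow> lo j < n"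
  using lo_less_hi hi_less by fastforce

lemma edge_index_inj:
  "j < m \<Longrightarrow> j' < m \<Longrightarrow> lo j = lo j' \<Longrightarrow> hi j = hi j' \<Longrightarrow> j = j'"
  unfolding lo_def hi_def m_def edge_list_def
  by (metis distinct_sorted_list_of_set nth_eq_iff_index_eq prod.expand)

lemma edge_index_exists: "(u, v) \<in> E \<Longrightarrow> \<exists>j<m. lo j = u \<and> hi j = v"
  using set_edge_list unfolding lo_def hi_def m_def
  by (metis fst_conv in_set_conv_nth snd_conv)

lemma adj_iff_edge_index:
  "adj (n, E) u v \<longleftrightarrow> (\<exists>j<m. lo j = u \<and> hi j = v \<or> lo j = v \<and> hi j = u)"
  unfolding adj_def using edge_in_E by (auto dest!: edge_index_exists)

lemma adj_less: "adj (n, E) u v \<Longrightarrow> u < n \<and> v < n"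
  unfolding adj_def using edge_bounds by fastforce

definition incident :: "nat \<Rightarrow> nat set" where
  "incident u = {j. j < m \<and> (lo j = u \<or> hi j = u)}"

definition other_end :: "nat \<Rightarrow> nat \<Rightarrow> nat" where
  "other_end u j = (if lo j = u then hi j else lo j)"

lemma finite_incident: "finite (incident u)"
  unfolding incident_def by auto

lemma finite_nbrs: "finite (nbrs (n, E) u)"
  unfolding nbrs_def by auto

lemma bij_betw_other_end: "bij_betw (other_end u) (incident u) (nbrs (n, E) u)"
proof (rule bij_betw_imageI)
  show "inj_on (other_end u) (incident u)"
  proof (rule inj_onI)
    fix j j' assume j: "j \<in> incident u" and j': "j' \<in> incident u"
      and eq: "other_end u j = other_end u j'"
    have "lo j < hi j" "lo j' < hi j'"
      using j j' lo_less_hi unfolding incident_def by auto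
    then have "lo j = lo j' \<and> hi j = hi j'"
      using j j' eq unfolding incident_def other_end_def by (auto split: if_splits)
    then show "j = j'"
      using j j' edge_index_inj unfolding incident_def by blast
  qed
  show "other_end u ` incident u = nbrs (n, E) u"
  proof (intro equalityI subsetI)
    fix v assume "v \<in> other_end u ` incident u"
    then have "adj (n, E) u v"
      unfolding adj_iff_edge_index incident_def other_end_def by auto
    then show "v \<in> nbrs (n, E) u"
      unfolding nbrs_def using adj_less by auto
  next
    fix v assume "v \<in> nbrs (n, E) u"
    then obtain j where j: "j < m" "lo j = u \<and> hi j = v \<or> lo j = v \<and> hi j = u"
      unfolding nbrs_def adj_iff_edge_index by auto
    then have "j \<in> incident u" "v = other_end u j"
      using lo_less_hi[OF j(1)] unfolding incident_def other_end_def by auto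
    then show "v \<in> other_end u ` incident u"
      by auto
  qed
qed

lemma sum_nbrs_eq_sum_incident:
  "(\<Sum>v\<in>nbrs (n, E) u. h v) = (\<Sum>j\<in>incident u. h (other_end u j))"
  using sum.reindex_bij_betw[OF bij_betw_other_end, of h] by simp

lemma card_incident: "card (incident u) = deg (n, E) u"
  unfolding deg_def using bij_betw_same_card[OF bij_betw_other_end] .

lemma sum_nbrs_eq_sum_edges:
  fixes F :: "nat \<Rightarrow> nat \<Rightarrow> real"
  shows "(\<Sum>u<n. \<Sum>v\<in>nbrs (n, E) u. F u v) = (\<Sum>j<m. F (lo j) (hi j) + F (hi j) (lo j))"
proof -
  have incident_ends: "(\<Sum>j\<in>incident u. F u (other_end u j))
      = (\<Sum>j<m. (if lo j = u then F u (hi j) else 0) + (if hi j = u then F u (lo j) else 0))" for u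
  proof -
    have "incident u = {j \<in> {..<m}. lo j = u \<or> hi j = u}"
      unfolding incident_def by auto
    then have "(\<Sum>j\<in>incident u. F u (other_end u j))
        = (\<Sum>j<m. if lo j = u \<or> hi j = u then F u (other_end u j) else 0)"
      using sum.inter_filter[of "{..<m}" "\<lambda>j. F u (other_end u j)" "\<lambda>j. lo j = u \<or> hi j = u"]
      by simp
    also have "\<dots> = (\<Sum>j<m. (if lo j = u then F u (hi j) else 0) + (if hi j = u then F u (lo j) else 0))"
    proof (rule sum.cong[OF refl])
      fix j assume "j \<in> {..<m}"
      then have "lo j \<noteq> hi j"
        using lo_less_hi by fastforce
      then show "(if lo j = u \<or> hi j = u then F u (other_end u j) else 0)
          = (if lo j = u then F u (hi j) else 0) + (if hi j = u then F u (lo j) else 0)"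
        by (auto simp: other_end_def)
    qed
    finally show ?thesis .
  qed
  have "(\<Sum>u<n. \<Sum>v\<in>nbrs (n, E) u. F u v)
      = (\<Sum>j<m. \<Sum>u<n. (if lo j = u then F u (hi j) else 0) + (if hi j = u then F u (lo j) else 0))"
    unfolding sum_nbrs_eq_sum_incident incident_ends by (rule sum.swap)
  also have "\<dots> = (\<Sum>j<m. F (lo j) (hi j) + F (hi j) (lo j))"
    using lo_less hi_less by (intro sum.cong) (simp_all add: sum.distrib)
  finally show ?thesis .
qed

lemma sum_edge_endpoints:
  "(\<Sum>j<m. f (lo j) + f (hi j)) = (\<Sum>u<n. real (deg (n, E) u) * f u)"
  using sum_nbrs_eq_sum_edges[of "\<lambda>u v. f u"] by (simp add: deg_def)

lemma handshake: "(\<Sum>u<n. real (deg (n, E) u)) = 2 * real m"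
  using sum_edge_endpoints[of "\<lambda>u. 1"] by simp

lemma lap_apply_eq_sum: "lap_apply (n, E) x u = (\<Sum>v\<in>nbrs (n, E) u. x u - x v)"
  unfolding lap_apply_def by (simp add: sum_subtractf deg_def)

lemma sum_lap_apply: "(\<Sum>u<n. lap_apply (n, E) x u) = 0"
  unfolding lap_apply_eq_sum sum_nbrs_eq_sum_edges by simp

end

section \<open>Green's function and the Kirchhoff index\<close>

locale connected_simple_graph = finite_simple_graph +
  assumes connected: "connected_graph (n, E)"
begin

lemma n_pos: "0 < n"
  using connected unfolding connected_graph_def by auto

text \<open>Maximum principle: a potential that is harmonic at every vertex attains its
  maximum on a set closed under adjacency, hence everywhere.\<close>

lemma harmonic_imp_constant:
  assumes harmonic: "\<And>i. i < n \<Longrightarrow> lap_apply (n, E) x i = 0" and "a < n" "b < n"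
  shows "x a = x b"
proof -
  define M where "M = Max (x ` {..<n})"
  have le_M: "x i \<le> M" if "i < n" for i
    unfolding M_def using that by auto
  have "M \<in> x ` {..<n}"
    unfolding M_def using n_pos by (intro Max_in) auto
  then obtain i0 where i0: "i0 < n" "x i0 = M"
    by auto
  have max_step: "x j = M" if "i < n" "x i = M" "adj (n, E) i j" for i j
  proof -
    have j: "j \<in> nbrs (n, E) i"
      using that adj_less unfolding nbrs_def by auto
    have "(\<Sum>v\<in>nbrs (n, E) i. x i - x v) = 0"
      using harmonic[OF that(1)] lap_apply_eq_sum by simp
    moreover have "0 \<le> x i - x v" if "v \<in> nbrs (n, E) i" for v
      using le_M \<open>x i = M\<close> that unfolding nbrs_def by auto
    ultimately have "\<forall>v\<in>nbrs (n, E) i. x i - x v = 0"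
      using sum_nonneg_eq_0_iff[OF finite_nbrs] by metis
    then show ?thesis
      using j that(2) by auto
  qed
  have "c < n \<and> x c = M" if "(adj (n, E))\<^sup>*\<^sup>* i0 c" for c
    using that
  proof (induction rule: rtranclp_induct)
    case (step y z)
    then have "y < n" "x y = M"
      by auto
    then show ?case
      using adj_less[OF step(2)] max_step[OF _ _ step(2)] by auto
  qed (use i0 in auto)
  moreover have "(adj (n, E))\<^sup>*\<^sup>* i0 c" if "c < n" for c
    using connected i0(1) that unfolding connected_graph_def by auto
  ultimately show ?thesis
    using \<open>a < n\<close> \<open>b < n\<close> by metis
qed

lemma resistance_eqI:
  assumes "a < n" "b < n"
    and x: "\<And>i. i < n \<Longrightarrow> lap_apply (n, E) x i = (if i = a then 1 else 0) - (if i = b then 1 else 0)"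
  shows "resistance (n, E) a b = x a - x b"
  unfolding resistance_def fst_conv
proof (rule the_equality)
  show "\<exists>y. (\<forall>i<n. lap_apply (n, E) y i = (if i = a then 1 else 0) - (if i = b then 1 else 0))
      \<and> x a - x b = y a - y b"
    using x by blast
next
  fix w
  assume "\<exists>y. (\<forall>i<n. lap_apply (n, E) y i = (if i = a then 1 else 0) - (if i = b then 1 else 0))
      \<and> w = y a - y b"
  then obtain y where y: "\<forall>i<n. lap_apply (n, E) y i = (if i = a then 1 else 0) - (if i = b then 1 else 0)"
    and w: "w = y a - y b"
    by auto
  have "lap_apply (n, E) (\<lambda>i. x i - y i) i = 0" if "i < n" for i
    using x y that by (simp add: lap_apply_diff)
  then have "x a - y a = x b - y b"
    using harmonic_imp_constant[of "\<lambda>i. x i - y i"] \<open>a < n\<close> \<open>b < n\<close> by blast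
  then show "w = x a - x b"
    using w by simp
qed

text \<open>Row \<open>0\<close> of the Laplacian is redundant because the rows add up to zero; replacing it by
  the unit row fixes the potential at vertex \<open>0\<close>, which removes the constants from the kernel.\<close>

definition grounded_lap :: "real mat" where
  "grounded_lap = mat n n (\<lambda>(i, j). if i = 0 then (if j = 0 then 1 else 0)
     else (if i = j then real (deg (n, E) i) else 0) - (if adj (n, E) i j then 1 else 0))"

lemma grounded_lap_carrier: "grounded_lap \<in> carrier_mat n n"
  by (simp add: grounded_lap_def)

lemma grounded_lap_mult_vec:
  assumes v: "v \<in> carrier_vec n" and i: "i < n"
  shows "(grounded_lap *\<^sub>v v) $ i
    = (if i = 0 then v $ 0 else lap_apply (n, E) (\<lambda>j. if j < n then v $ j else 0) i)"
proof -
  have row: "(grounded_lap *\<^sub>v v) $ i = (\<Sum>j\<in>{0..<n}. grounded_lap $$ (i, j) * v $ j)"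
    using v i by (simp add: grounded_lap_def scalar_prod_def)
  show ?thesis
  proof (cases "i = 0")
    case True
    have "(\<Sum>j\<in>{0..<n}. grounded_lap $$ (i, j) * v $ j) = (\<Sum>j\<in>{0..<n}. if j = 0 then v $ 0 else 0)"
      using True i by (intro sum.cong) (auto simp: grounded_lap_def)
    then show ?thesis
      using row True n_pos by simp
  next
    case False
    have nbrs_eq: "nbrs (n, E) i = {j \<in> {0..<n}. adj (n, E) i j}"
      unfolding nbrs_def by auto
    have "(\<Sum>j\<in>{0..<n}. grounded_lap $$ (i, j) * v $ j)
        = (\<Sum>j\<in>{0..<n}. if i = j then real (deg (n, E) i) * v $ j else 0)
          - (\<Sum>j\<in>{0..<n}. if adj (n, E) i j then v $ j else 0)"
      unfolding sum_subtractf[symmetric]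
      by (rule sum.cong) (use i in \<open>auto simp: grounded_lap_def False algebra_simps\<close>)
    also have "\<dots> = real (deg (n, E) i) * v $ i - (\<Sum>j\<in>nbrs (n, E) i. v $ j)"
      unfolding nbrs_eq sum.inter_filter[OF finite_atLeastLessThan] using i by simp
    also have "\<dots> = lap_apply (n, E) (\<lambda>j. if j < n then v $ j else 0) i"
      unfolding lap_apply_def using i by (auto intro!: sum.cong simp: nbrs_def)
    finally show ?thesis
      using row False by simp
  qed
qed

lemma lap_apply_ground: "lap_apply (n, E) x 0 = - (\<Sum>i\<in>{..<n} - {0}. lap_apply (n, E) x i)"
  using sum_lap_apply[of x] sum.remove[of "{..<n}" 0 "lap_apply (n, E) x"] n_pos by simp

lemma det_grounded_lap: "det grounded_lap \<noteq> 0"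
proof
  assume "det grounded_lap = 0"
  then obtain v where v: "v \<in> carrier_vec n" "v \<noteq> 0\<^sub>v n" "grounded_lap *\<^sub>v v = 0\<^sub>v n"
    using det_0_iff_vec_prod_zero[OF grounded_lap_carrier] by auto
  define x where "x j = (if j < n then v $ j else 0)" for j
  have x_0: "x 0 = 0"
    using grounded_lap_mult_vec[OF v(1) n_pos] v(3) n_pos unfolding x_def by simp
  have lap_x: "lap_apply (n, E) x i = 0" if "i < n" "i \<noteq> 0" for i
    using grounded_lap_mult_vec[OF v(1) that(1)] v(3) that unfolding x_def by simp
  then have "lap_apply (n, E) x i = 0" if "i < n" for i
    using that lap_apply_ground[of x] by (cases "i = 0") simp_all
  then have "x i = 0" if "i < n" for i
    using harmonic_imp_constant that n_pos x_0 by metis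
  then have "v = 0\<^sub>v n"
    using v(1) unfolding x_def by (intro eq_vecI) auto
  with v(2) show False ..
qed

lemma lap_apply_solvable:
  assumes f: "(\<Sum>i<n. f i) = 0"
  shows "\<exists>x. \<forall>i<n. lap_apply (n, E) x i = f i"
proof -
  obtain B where B: "B \<in> carrier_mat n n" "grounded_lap * B = 1\<^sub>m n"
    using det_non_zero_imp_unit[OF grounded_lap_carrier det_grounded_lap, where b = "()"]
    unfolding Units_def ring_mat_def by auto
  define rhs where "rhs = vec n (\<lambda>i. if i = 0 then 0 else f i)"
  define z where "z = B *\<^sub>v rhs"
  define x where "x j = (if j < n then z $ j else 0)" for j
  have rhs: "rhs \<in> carrier_vec n"
    by (simp add: rhs_def)
  have z: "z \<in> carrier_vec n" "grounded_lap *\<^sub>v z = rhs"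
    unfolding z_def using B rhs assoc_mult_mat_vec[OF grounded_lap_carrier B(1) rhs] by auto
  have lap_x: "lap_apply (n, E) x i = f i" if "i < n" "i \<noteq> 0" for i
    using grounded_lap_mult_vec[OF z(1) that(1)] z(2) that unfolding x_def rhs_def by simp
  have "f 0 = - (\<Sum>i\<in>{..<n} - {0}. f i)"
    using f sum.remove[of "{..<n}" 0 f] n_pos by simp
  also have "\<dots> = lap_apply (n, E) x 0"
    unfolding lap_apply_ground[of x] using lap_x by (auto intro!: sum.cong)
  finally have "lap_apply (n, E) x i = f i" if "i < n" for i
    using lap_x that by (cases "i = 0") simp_all
  then show ?thesis
    by blast
qed

end

definition grounded_green :: "graph \<Rightarrow> (nat \<Rightarrow> nat \<Rightarrow> real) \<Rightarrow> bool" where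
  "grounded_green G Z \<longleftrightarrow> (\<forall>u < fst G. \<forall>i < fst G.
     lap_apply G (Z u) i = (if i = u then 1 else 0) - (if i = 0 then 1 else 0))"

context connected_simple_graph
begin

lemma grounded_green_exists: "\<exists>Z. grounded_green (n, E) Z"
proof -
  have "\<forall>u\<in>{..<n}. \<exists>z. \<forall>i<n. lap_apply (n, E) z i = (if i = u then 1 else 0) - (if i = 0 then 1 else 0)"
    using n_pos by (intro ballI lap_apply_solvable) (simp add: sum_subtractf)
  then obtain Z where "\<forall>u\<in>{..<n}. \<forall>i<n.
      lap_apply (n, E) (Z u) i = (if i = u then 1 else 0) - (if i = 0 then 1 else 0)"
    by (metis bchoice)
  then show ?thesis
    unfolding grounded_green_def fst_conv by blast
qed

lemma grounded_green_trace:
  assumes "grounded_green (n, E) Z"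
  shows "(\<Sum>u<n. \<Sum>v\<in>nbrs (n, E) u. Z u v) = (\<Sum>u<n. real (deg (n, E) u) * Z u u) - real n + 1"
proof -
  have "(\<Sum>u<n. real (deg (n, E) u) * Z u u) - (\<Sum>u<n. \<Sum>v\<in>nbrs (n, E) u. Z u v)
      = (\<Sum>u<n. lap_apply (n, E) (Z u) u)"
    unfolding lap_apply_def by (simp add: sum_subtractf)
  also have "\<dots> = (\<Sum>u<n. 1 - (if u = 0 then 1 else 0))"
    using assms unfolding grounded_green_def by simp
  also have "\<dots> = real n - 1"
    using n_pos by (simp add: sum_subtractf)
  finally show ?thesis
    by simp
qed

lemma kf_star_grounded_green:
  assumes "grounded_green (n, E) Z"
  shows "kf_star (n, E) = (\<Sum>a<n. real (deg (n, E) a)) * (\<Sum>a<n. real (deg (n, E) a) * Z a a)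
     - (\<Sum>a<n. \<Sum>b<n. real (deg (n, E) a) * real (deg (n, E) b) * Z a b)"
proof -
  define d where "d a = real (deg (n, E) a)" for a
  have "resistance (n, E) a b = (Z a a - Z b a) - (Z a b - Z b b)" if "a < n" "b < n" for a b
    using assms that by (intro resistance_eqI) (simp_all add: grounded_green_def lap_apply_diff)
  then have "kf_star (n, E) = (\<Sum>a<n. \<Sum>b\<in>{a<..<n}. d a * d b * (Z a a - Z b a - Z a b + Z b b))"
    unfolding kf_star_def fst_conv d_def by (intro sum.cong refl) simp
  also have "\<dots> = (\<Sum>a<n. \<Sum>b<n. d a * d b * (Z a a - Z b a - Z a b + Z b b)) / 2"
    by (rule sum_upper_triangle_eq_half) (simp_all add: algebra_simps)
  also have "(\<Sum>a<n. \<Sum>b<n. d a * d b * (Z a a - Z b a - Z a b + Z b b))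
      = (\<Sum>a<n. \<Sum>b<n. d a * d b * Z a a) + (\<Sum>a<n. \<Sum>b<n. d a * d b * Z b b)
        - (\<Sum>a<n. \<Sum>b<n. d a * d b * Z b a) - (\<Sum>a<n. \<Sum>b<n. d a * d b * Z a b)"
    by (simp add: sum_subtractf sum.distrib algebra_simps)
  also have "(\<Sum>a<n. \<Sum>b<n. d a * d b * Z b b) = (\<Sum>a<n. \<Sum>b<n. d a * d b * Z a a)"
    by (subst sum.swap) (simp add: mult_ac)
  also have "(\<Sum>a<n. \<Sum>b<n. d a * d b * Z b a) = (\<Sum>a<n. \<Sum>b<n. d a * d b * Z a b)"
    by (subst sum.swap) (simp add: mult_ac)
  also have "(\<Sum>a<n. \<Sum>b<n. d a * d b * Z a a) = (\<Sum>a<n. d a) * (\<Sum>a<n. d a * Z a a)"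
    unfolding sum_product by (subst sum.swap) (simp add: mult_ac)
  finally show ?thesis
    unfolding d_def by simp
qed

end

section \<open>The parallel subdivision\<close>

locale parallel_subdivision = connected_simple_graph +
  fixes k :: nat
  assumes k_pos: "0 < k"
begin

definition N :: nat where
  "N = n + k * m"

definition mid :: "nat \<Rightarrow> nat \<Rightarrow> nat" where
  "mid j c = n + j * k + c"

definition edge_of :: "nat \<Rightarrow> nat" where
  "edge_of t = (t - n) div k"

definition EH :: "(nat \<times> nat) set" where
  "EH = {(lo j, mid j c) | j c. j < m \<and> c < k} \<union> {(hi j, mid j c) | j c. j < m \<and> c < k}"

lemma par_subdiv_eq: "par_subdiv k (n, E) = (N, EH)"
  unfolding par_subdiv_def Let_def N_def EH_def mid_def lo_def hi_def m_def edge_list_def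
  by simp

lemma mid_ge: "n \<le> mid j c"
  unfolding mid_def by simp

lemma mid_less: assumes "j < m" "c < k" shows "mid j c < N"
proof -
  have "j * k + c < (j + 1) * k"
    using assms by simp
  also have "\<dots> \<le> m * k"
    using assms by (intro mult_le_mono1) simp
  finally show ?thesis
    unfolding mid_def N_def by (simp add: mult.commute)
qed

lemma edge_of_mid: "c < k \<Longrightarrow> edge_of (mid j c) = j"
  unfolding edge_of_def mid_def by simp

lemma mid_inject:
  assumes "c < k" "c' < k"
  shows "mid j c = mid j' c' \<longleftrightarrow> j = j' \<and> c = c'"
proof
  assume eq: "mid j c = mid j' c'"
  then have "j = j'"
    using edge_of_mid[OF assms(1), of j] edge_of_mid[OF assms(2), of j'] by simp
  with eq show "j = j' \<and> c = c'"
    unfolding mid_def by simp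
qed simp

lemma mid_edge_of: "n \<le> t \<Longrightarrow> t = mid (edge_of t) ((t - n) mod k)"
  unfolding mid_def edge_of_def by (simp add: add.assoc)

lemma new_vertex_cases:
  assumes "t < N" "n \<le> t"
  obtains j c where "j < m" "c < k" "t = mid j c"
proof
  have "t - n < m * k"
    using assms unfolding N_def by (simp add: mult.commute)
  then show "edge_of t < m"
    unfolding edge_of_def by (simp add: less_mult_imp_div_less)
  show "(t - n) mod k < k"
    using k_pos by simp
  show "t = mid (edge_of t) ((t - n) mod k)"
    using assms(2) by (rule mid_edge_of)
qed

lemma sum_mid_indicator:
  "(\<Sum>c<k. if s = mid j c then 1 else 0 :: real) = (if n \<le> s \<and> edge_of s = j then 1 else 0)"
proof (cases "n \<le> s \<and> edge_of s = j")
  case True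
  have "(s - n) mod k < k"
    using k_pos by simp
  then have "s = mid j c \<longleftrightarrow> c = (s - n) mod k" if "c < k" for c
    using mid_edge_of[of s] True mid_inject that by metis
  then have "(\<Sum>c<k. if s = mid j c then 1 else 0 :: real) = (\<Sum>c<k. if c = (s - n) mod k then 1 else 0)"
    by (intro sum.cong) auto
  then show ?thesis
    using True k_pos by simp
next
  case False
  then have "s \<noteq> mid j c" if "c < k" for c
    using that edge_of_mid mid_ge by blast
  then show ?thesis
    using False by simp
qed

lemma sum_mid_indicator_edges:
  "finite J \<Longrightarrow> (\<Sum>j\<in>J. \<Sum>c<k. if s = mid j c then 1 else 0 :: real)
    = (if n \<le> s \<and> edge_of s \<in> J then 1 else 0)"
  unfolding sum_mid_indicator by (cases "n \<le> s") (simp_all add: sum.delta)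

lemma sum_subdiv_vertices:
  "(\<Sum>t<N. f t) = (\<Sum>u<n. f u) + (\<Sum>j<m. \<Sum>c<k. f (mid j c))"
  unfolding N_def sum_lessThan_add mult.commute[of k m] sum_lessThan_mult mid_def
  by (simp add: add.assoc)

lemma simple_graph_subdiv: "simple_graph (N, EH)"
  unfolding simple_graph_def EH_def using mid_less lo_less hi_less mid_ge
  by (fastforce dest: order.strict_trans2)

lemma subdiv_edge_bounds: "(x, y) \<in> EH \<Longrightarrow> x < n \<and> n \<le> y"
  unfolding EH_def using lo_less hi_less mid_ge by auto

lemma adj_subdiv_old:
  assumes "u < n"
  shows "adj (N, EH) u y \<longleftrightarrow> (\<exists>j c. j < m \<and> c < k \<and> y = mid j c \<and> (lo j = u \<or> hi j = u))"
proof -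
  have "(y, u) \<notin> EH"
    using subdiv_edge_bounds assms by fastforce
  then show ?thesis
    unfolding adj_def snd_conv EH_def by auto
qed

lemma adj_subdiv_mid:
  assumes "j < m" "c < k"
  shows "adj (N, EH) (mid j c) y \<longleftrightarrow> y = lo j \<or> y = hi j"
proof -
  have "(mid j c, y) \<notin> EH"
    using subdiv_edge_bounds mid_ge not_le by blast
  moreover have "(y, mid j c) \<in> EH \<longleftrightarrow> y = lo j \<or> y = hi j"
    unfolding EH_def using assms mid_inject by auto
  ultimately show ?thesis
    unfolding adj_def snd_conv by auto
qed

lemma inj_on_mid: "inj_on (\<lambda>(j, c). mid j c) (J \<times> {..<k})"
  by (auto intro!: inj_onI simp: mid_inject)

lemma nbrs_subdiv_old:
  assumes "u < n"
  shows "nbrs (N, EH) u = (\<lambda>(j, c). mid j c) ` (incident u \<times> {..<k})"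
  unfolding nbrs_def fst_conv adj_subdiv_old[OF assms] incident_def using mid_less by auto

lemma nbrs_subdiv_mid:
  assumes "j < m" "c < k"
  shows "nbrs (N, EH) (mid j c) = {lo j, hi j}"
  unfolding nbrs_def fst_conv adj_subdiv_mid[OF assms]
  using lo_less[OF assms(1)] hi_less[OF assms(1)] by (auto simp: N_def)

lemma sum_nbrs_subdiv_old:
  assumes "u < n"
  shows "(\<Sum>y\<in>nbrs (N, EH) u. g y) = (\<Sum>j\<in>incident u. \<Sum>c<k. g (mid j c))"
  unfolding nbrs_subdiv_old[OF assms] sum.reindex[OF inj_on_mid]
  by (simp add: sum.cartesian_product case_prod_beta)

lemma sum_nbrs_subdiv_mid:
  assumes "j < m" "c < k"
  shows "(\<Sum>y\<in>nbrs (N, EH) (mid j c). g y) = g (lo j) + g (hi j)"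
  unfolding nbrs_subdiv_mid[OF assms] using lo_less_hi[OF assms(1)] by simp

lemma deg_subdiv_old:
  assumes "u < n"
  shows "deg (N, EH) u = k * deg (n, E) u"
  unfolding deg_def nbrs_subdiv_old[OF assms] card_image[OF inj_on_mid] card_cartesian_product
  by (simp add: card_incident[unfolded deg_def])

lemma deg_subdiv_mid:
  assumes "j < m" "c < k"
  shows "deg (N, EH) (mid j c) = 2"
  unfolding deg_def nbrs_subdiv_mid[OF assms] using lo_less_hi[OF assms(1)] by simp

lemma connected_graph_subdiv: "connected_graph (N, EH)"
proof -
  let ?R = "adj (N, EH)"
  have sym: "?R\<^sup>*\<^sup>* y x" if "?R\<^sup>*\<^sup>* x y" for x y
  proof -
    have "?R\<inverse>\<inverse> = ?R"
      by (auto simp: adj_def fun_eq_iff)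
    then show ?thesis
      using rtranclp_converseI[OF that] by simp
  qed
  have lift: "?R\<^sup>*\<^sup>* u v" if "(adj (n, E))\<^sup>*\<^sup>* u v" for u v
    using that
  proof (induction rule: rtranclp_induct)
    case (step y z)
    then obtain j where j: "j < m" "lo j = y \<and> hi j = z \<or> lo j = z \<and> hi j = y"
      unfolding adj_iff_edge_index by auto
    then have "?R y (mid j 0)" "?R (mid j 0) z"
      using j k_pos adj_subdiv_mid[OF j(1) k_pos] adj_less[OF step(2)] adj_subdiv_old
      by (auto simp: adj_def)
    then show ?case
      using step(3) by (meson rtranclp.rtrancl_into_rtrancl)
  qed simp
  have to_old: "\<exists>u<n. ?R\<^sup>*\<^sup>* t u" if t: "t < N" for t
  proof (cases "t < n")
    case True
    then show ?thesis
      by blast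
  next
    case False
    then obtain j c where jc: "j < m" "c < k" "t = mid j c"
      using new_vertex_cases[OF t] by (metis not_less)
    then have "?R t (lo j)"
      using adj_subdiv_mid[OF jc(1,2)] by simp
    then show ?thesis
      using lo_less[OF jc(1)] by blast
  qed
  have "?R\<^sup>*\<^sup>* a b" if ab: "a < N" "b < N" for a b
  proof -
    obtain u v where "u < n" "v < n" "?R\<^sup>*\<^sup>* a u" "?R\<^sup>*\<^sup>* b v"
      using to_old ab by blast
    moreover have "(adj (n, E))\<^sup>*\<^sup>* u v"
      using connected \<open>u < n\<close> \<open>v < n\<close> unfolding connected_graph_def by simp
    then have "?R\<^sup>*\<^sup>* u v"
      by (rule lift)
    ultimately show ?thesis
      using sym by (meson rtranclp_trans)
  qed
  moreover have "0 < N"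
    using n_pos unfolding N_def by simp
  ultimately show ?thesis
    unfolding connected_graph_def by simp
qed

sublocale H: connected_simple_graph N EH
  using simple_graph_subdiv connected_graph_subdiv
  by unfold_locales

lemma sum_deg_subdiv: "(\<Sum>t<N. real (deg (N, EH) t)) = 4 * real k * real m"
proof -
  have "(\<Sum>t<N. real (deg (N, EH) t)) = (\<Sum>u<n. real k * real (deg (n, E) u)) + (\<Sum>j<m. \<Sum>c<k. 2)"
    unfolding sum_subdiv_vertices using deg_subdiv_old deg_subdiv_mid by simp
  also have "\<dots> = 4 * real k * real m"
    using handshake by (simp add: sum_distrib_left[symmetric])
  finally show ?thesis .
qed

lemma num_edges_subdiv: "card EH = 2 * k * m"
proof -
  have "2 * real H.m = 4 * real k * real m"
    using H.handshake sum_deg_subdiv by simp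
  then have "H.m = 2 * k * m"
    by (simp del: of_nat_mult add: of_nat_mult[symmetric])
  then show ?thesis
    using H.m_eq_card by simp
qed

end

section \<open>Green's function of the subdivision\<close>

locale subdivision_green = parallel_subdivision +
  fixes Z :: "nat \<Rightarrow> nat \<Rightarrow> real"
  assumes green: "grounded_green (n, E) Z"
begin

lemma lap_apply_green:
  "u < n \<Longrightarrow> i < n \<Longrightarrow> lap_apply (n, E) (Z u) i = (if i = u then 1 else 0) - (if i = 0 then 1 else 0)"
  using green unfolding grounded_green_def by simp

text \<open>A middle vertex carries the mean potential of the two ends of its edge, plus \<open>1/2\<close> if
  the current enters there. Eliminating the middle vertices leaves \<open>k/2\<close> times the Laplacian
  of the original graph at the old vertices, with net currents \<open>e\<^sub>s - e\<^sub>0\<close> for an old source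
  \<open>s\<close> and \<open>(e\<^sub>l\<^sub>o + e\<^sub>h\<^sub>i)/2 - e\<^sub>0\<close> for a middle source \<open>s\<close>; \<^term>\<open>lift_pot s\<close>
  solves this reduced system.\<close>

definition lift_pot :: "nat \<Rightarrow> nat \<Rightarrow> real" where
  "lift_pot s v = (if s < n then 2 / real k * Z s v
     else 1 / real k * (Z (lo (edge_of s)) v + Z (hi (edge_of s)) v))"

definition lift_green :: "nat \<Rightarrow> nat \<Rightarrow> real" where
  "lift_green s t = (if t < n then lift_pot s t
     else (lift_pot s (lo (edge_of t)) + lift_pot s (hi (edge_of t)) + (if s = t then 1 else 0)) / 2)"

lemma lift_pot_old: "s < n \<Longrightarrow> lift_pot s = (\<lambda>v. 2 / real k * Z s v)"
  unfolding lift_pot_def by auto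

lemma lift_pot_mid:
  assumes "c < k"
  shows "lift_pot (mid j c) = (\<lambda>v. 1 / real k * (Z (lo j) v + Z (hi j) v))"
proof -
  have "\<not> mid j c < n"
    using mid_ge[of j c] by simp
  then show ?thesis
    unfolding lift_pot_def edge_of_mid[OF assms] by simp
qed

lemma lift_green_old: "t < n \<Longrightarrow> lift_green s t = lift_pot s t"
  unfolding lift_green_def by simp

lemma lift_green_mid:
  assumes "c < k"
  shows "lift_green s (mid j c) = (lift_pot s (lo j) + lift_pot s (hi j) + (if s = mid j c then 1 else 0)) / 2"
proof -
  have "\<not> mid j c < n"
    using mid_ge[of j c] by simp
  then show ?thesis
    unfolding lift_green_def edge_of_mid[OF assms] by simp
qed

lemma lap_lift_pot_old:
  assumes "s < n" "v < n"
  shows "lap_apply (n, E) (lift_pot s) v = 2 / real k * ((if v = s then 1 else 0) - (if v = 0 then 1 else 0))"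
  unfolding lift_pot_old[OF assms(1)] lap_apply_scale using assms by (simp add: lap_apply_green)

lemma lap_lift_pot_mid:
  assumes "j < m" "c < k" "v < n"
  shows "lap_apply (n, E) (lift_pot (mid j c)) v
    = 1 / real k * ((if v = lo j then 1 else 0) + (if v = hi j then 1 else 0) - 2 * (if v = 0 then 1 else 0))"
  unfolding lift_pot_mid[OF assms(2)] lap_apply_scale lap_apply_add
  using assms lo_less hi_less by (simp add: lap_apply_green)

lemma lap_lift_green_mid:
  assumes "j < m" "c < k"
  shows "lap_apply (N, EH) (lift_green s) (mid j c) = (if s = mid j c then 1 else 0)"
  unfolding H.lap_apply_eq_sum sum_nbrs_subdiv_mid[OF assms] lift_green_mid[OF assms(2)]
    lift_green_old[OF lo_less[OF assms(1)]] lift_green_old[OF hi_less[OF assms(1)]]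
  by simp

lemma lap_lift_green_old:
  assumes t: "t < n"
  shows "lap_apply (N, EH) (lift_green s) t
    = real k / 2 * lap_apply (n, E) (lift_pot s) t - (if n \<le> s \<and> edge_of s \<in> incident t then 1 else 0) / 2"
proof -
  define P where "P j = lift_pot s t - lift_pot s (other_end t j)" for j
  define q where "q j c = (if s = mid j c then 1 else 0 :: real)" for j c
  have "lap_apply (N, EH) (lift_green s) t = (\<Sum>j\<in>incident t. \<Sum>c<k. lift_green s t - lift_green s (mid j c))"
    unfolding H.lap_apply_eq_sum sum_nbrs_subdiv_old[OF t] ..
  also have "\<dots> = (\<Sum>j\<in>incident t. \<Sum>c<k. P j / 2 - q j c / 2)"
  proof (intro sum.cong refl)
    fix j c assume j: "j \<in> incident t" and "c \<in> {..<k}"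
    then have "c < k"
      by simp
    have ends: "lift_pot s (lo j) + lift_pot s (hi j) = lift_pot s t + lift_pot s (other_end t j)"
      using j unfolding incident_def other_end_def by auto
    show "lift_green s t - lift_green s (mid j c) = P j / 2 - q j c / 2"
      unfolding lift_green_old[OF t] lift_green_mid[OF \<open>c < k\<close>] ends P_def q_def
      by (simp add: field_simps)
  qed
  also have "\<dots> = real k / 2 * (\<Sum>j\<in>incident t. P j) - (\<Sum>j\<in>incident t. \<Sum>c<k. q j c) / 2"
    by (simp add: sum_subtractf sum_distrib_left sum_divide_distrib[symmetric])
  also have "(\<Sum>j\<in>incident t. P j) = lap_apply (n, E) (lift_pot s) t"
    unfolding lap_apply_eq_sum sum_nbrs_eq_sum_incident P_def ..
  also have "(\<Sum>j\<in>incident t. \<Sum>c<k. q j c) = (if n \<le> s \<and> edge_of s \<in> incident t then 1 else 0)"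
    unfolding q_def by (rule sum_mid_indicator_edges[OF finite_incident])
  finally show ?thesis .
qed

lemma grounded_green_lift: "grounded_green (N, EH) lift_green"
  unfolding grounded_green_def fst_conv
proof (intro allI impI)
  fix s t assume s: "s < N" and t: "t < N"
  show "lap_apply (N, EH) (lift_green s) t = (if t = s then 1 else 0) - (if t = 0 then 1 else 0)"
  proof (cases "t < n")
    case False
    then obtain j c where jc: "j < m" "c < k" "t = mid j c"
      using new_vertex_cases[OF t] by (metis not_less)
    then show ?thesis
      using lap_lift_green_mid[OF jc(1,2)] False n_pos by auto
  next
    case t_old: True
    show ?thesis
    proof (cases "s < n")
      case True
      then show ?thesis
        using lap_lift_green_old[OF t_old] lap_lift_pot_old[OF True t_old] k_pos by simp
    next
      case False
      then obtain j c where jc: "j < m" "c < k" "s = mid j c"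
        using new_vertex_cases[OF s] by (metis not_less)
      have "(if j \<in> incident t then 1 else 0 :: real) = (if t = lo j then 1 else 0) + (if t = hi j then 1 else 0)"
        using lo_less_hi[OF jc(1)] jc(1) unfolding incident_def by auto
      then have "lap_apply (N, EH) (lift_green s) t = - (if t = 0 then 1 else 0)"
        unfolding lap_lift_green_old[OF t_old] jc(3) lap_lift_pot_mid[OF jc(1,2) t_old]
        using k_pos mid_ge[of j c] edge_of_mid[OF jc(2)] by (simp add: field_simps)
      moreover have "t \<noteq> s"
        using t_old False by auto
      ultimately show ?thesis
        by simp
    qed
  qed
qed

end

context subdivision_green
begin

lemma sum_deg_diag_lift_green:
  "(\<Sum>t<N. real (deg (N, EH) t) * lift_green t t)
    = 4 * (\<Sum>u<n. real (deg (n, E) u) * Z u u) - real n + 1 + real k * real m"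
proof -
  define D where "D = (\<Sum>u<n. real (deg (n, E) u) * Z u u)"
  have old: "(\<Sum>u<n. real (deg (N, EH) u) * lift_green u u) = 2 * D"
    unfolding D_def sum_distrib_left
    by (intro sum.cong refl) (use k_pos in \<open>simp add: deg_subdiv_old lift_green_old lift_pot_old\<close>)
  have mid: "(\<Sum>j<m. \<Sum>c<k. real (deg (N, EH) (mid j c)) * lift_green (mid j c) (mid j c))
      = (\<Sum>j<m. (Z (lo j) (lo j) + Z (hi j) (hi j)) + (Z (lo j) (hi j) + Z (hi j) (lo j)) + real k)"
  proof (intro sum.cong refl)
    fix j assume "j \<in> {..<m}"
    then have j: "j < m"
      by simp
    have "(\<Sum>c<k. real (deg (N, EH) (mid j c)) * lift_green (mid j c) (mid j c))
        = (\<Sum>c<k. 1 / real k * ((Z (lo j) (lo j) + Z (hi j) (hi j)) + (Z (lo j) (hi j) + Z (hi j) (lo j))) + 1)"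
      by (intro sum.cong refl) (simp add: deg_subdiv_mid[OF j] lift_green_mid lift_pot_mid algebra_simps)
    also have "\<dots> = (Z (lo j) (lo j) + Z (hi j) (hi j)) + (Z (lo j) (hi j) + Z (hi j) (lo j)) + real k"
      using k_pos by (simp add: field_simps)
    finally show "(\<Sum>c<k. real (deg (N, EH) (mid j c)) * lift_green (mid j c) (mid j c))
        = (Z (lo j) (lo j) + Z (hi j) (hi j)) + (Z (lo j) (hi j) + Z (hi j) (lo j)) + real k" .
  qed
  have "(\<Sum>j<m. Z (lo j) (lo j) + Z (hi j) (hi j)) = D"
    unfolding D_def by (rule sum_edge_endpoints)
  moreover have "(\<Sum>j<m. Z (lo j) (hi j) + Z (hi j) (lo j)) = D - real n + 1"
    using sum_nbrs_eq_sum_edges[of Z] grounded_green_trace[OF green] unfolding D_def by simp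
  ultimately show ?thesis
    unfolding sum_subdiv_vertices old mid D_def[symmetric] by (simp add: sum.distrib)
qed

lemma sum_deg_row_lift_green:
  assumes s: "s < N"
  shows "(\<Sum>t<N. real (deg (N, EH) t) * lift_green s t)
    = 2 * real k * (\<Sum>u<n. real (deg (n, E) u) * lift_pot s u) + (if s < n then 0 else 1)"
proof -
  have old: "(\<Sum>u<n. real (deg (N, EH) u) * lift_green s u)
      = real k * (\<Sum>u<n. real (deg (n, E) u) * lift_pot s u)"
    unfolding sum_distrib_left by (intro sum.cong refl) (simp add: deg_subdiv_old lift_green_old)
  have mid: "(\<Sum>j<m. \<Sum>c<k. real (deg (N, EH) (mid j c)) * lift_green s (mid j c))
      = (\<Sum>j<m. real k * (lift_pot s (lo j) + lift_pot s (hi j))) + (\<Sum>j<m. \<Sum>c<k. if s = mid j c then 1 else 0)"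
    unfolding sum.distrib[symmetric]
  proof (intro sum.cong refl)
    fix j assume "j \<in> {..<m}"
    then have j: "j < m"
      by simp
    have "(\<Sum>c<k. real (deg (N, EH) (mid j c)) * lift_green s (mid j c))
        = (\<Sum>c<k. (lift_pot s (lo j) + lift_pot s (hi j)) + (if s = mid j c then 1 else 0))"
      by (intro sum.cong refl) (simp add: deg_subdiv_mid[OF j] lift_green_mid)
    then show "(\<Sum>c<k. real (deg (N, EH) (mid j c)) * lift_green s (mid j c))
        = real k * (lift_pot s (lo j) + lift_pot s (hi j)) + (\<Sum>c<k. if s = mid j c then 1 else 0)"
      by (simp add: sum.distrib)
  qed
  have "n \<le> s \<and> edge_of s \<in> {..<m} \<longleftrightarrow> \<not> s < n"
    using new_vertex_cases[OF s] edge_of_mid by (metis lessThan_iff not_less)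
  then have "(\<Sum>j<m. \<Sum>c<k. if s = mid j c then 1 else 0 :: real) = (if s < n then 0 else 1)"
    using sum_mid_indicator_edges[of "{..<m}" s] by simp
  then show ?thesis
    unfolding sum_subdiv_vertices old mid sum_distrib_left[symmetric] sum_edge_endpoints by simp
qed

lemma sum_deg_deg_lift_green:
  "(\<Sum>s<N. \<Sum>t<N. real (deg (N, EH) s) * real (deg (N, EH) t) * lift_green s t)
    = 8 * real k * (\<Sum>a<n. \<Sum>b<n. real (deg (n, E) a) * real (deg (n, E) b) * Z a b) + 2 * real k * real m"
proof -
  define d where "d u = real (deg (n, E) u)" for u
  define SZ where "SZ u = (\<Sum>v<n. d v * Z u v)" for u
  have pot_old: "(\<Sum>u<n. d u * lift_pot s u) = 2 / real k * SZ s" if "s < n" for s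
    unfolding SZ_def lift_pot_old[OF that] sum_distrib_left by (simp add: mult_ac)
  have pot_mid: "(\<Sum>u<n. d u * lift_pot (mid j c) u) = 1 / real k * (SZ (lo j) + SZ (hi j))" if "c < k" for j c
    unfolding SZ_def lift_pot_mid[OF that] sum_distrib_left sum.distrib[symmetric] by (simp add: algebra_simps)
  have "(\<Sum>s<N. \<Sum>t<N. real (deg (N, EH) s) * real (deg (N, EH) t) * lift_green s t)
      = (\<Sum>s<N. real (deg (N, EH) s) * (2 * real k * (\<Sum>u<n. d u * lift_pot s u) + (if s < n then 0 else 1)))"
  proof (intro sum.cong refl)
    fix s assume "s \<in> {..<N}"
    then have row: "(\<Sum>t<N. real (deg (N, EH) t) * lift_green s t)
        = 2 * real k * (\<Sum>u<n. d u * lift_pot s u) + (if s < n then 0 else 1)"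
      unfolding d_def by (simp add: sum_deg_row_lift_green)
    have "(\<Sum>t<N. real (deg (N, EH) s) * real (deg (N, EH) t) * lift_green s t)
        = real (deg (N, EH) s) * (\<Sum>t<N. real (deg (N, EH) t) * lift_green s t)"
      by (simp add: sum_distrib_left mult.assoc)
    then show "(\<Sum>t<N. real (deg (N, EH) s) * real (deg (N, EH) t) * lift_green s t)
        = real (deg (N, EH) s) * (2 * real k * (\<Sum>u<n. d u * lift_pot s u) + (if s < n then 0 else 1))"
      unfolding row .
  qed
  also have "\<dots> = (\<Sum>u<n. 4 * real k * (d u * SZ u)) + (\<Sum>j<m. \<Sum>c<k. 4 * (SZ (lo j) + SZ (hi j)) + 2)"
    unfolding sum_subdiv_vertices
  proof (intro arg_cong2[where f = "(+)"] sum.cong refl)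
    fix u assume "u \<in> {..<n}"
    then show "real (deg (N, EH) u) * (2 * real k * (\<Sum>v<n. d v * lift_pot u v) + (if u < n then 0 else 1))
        = 4 * real k * (d u * SZ u)"
      using k_pos by (simp add: deg_subdiv_old pot_old flip: d_def)
  next
    fix j c assume "j \<in> {..<m}" "c \<in> {..<k}"
    then show "real (deg (N, EH) (mid j c)) * (2 * real k * (\<Sum>u<n. d u * lift_pot (mid j c) u)
          + (if mid j c < n then 0 else 1)) = 4 * (SZ (lo j) + SZ (hi j)) + 2"
      using k_pos mid_ge[of j c] by (simp add: deg_subdiv_mid pot_mid field_simps)
  qed
  also have "\<dots> = 8 * real k * (\<Sum>u<n. d u * SZ u) + 2 * real k * real m"
  proof -
    have "(\<Sum>j<m. \<Sum>c<k. 4 * (SZ (lo j) + SZ (hi j)) + 2) = real k * (\<Sum>j<m. 4 * (SZ (lo j) + SZ (hi j)) + 2)"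
      by (simp add: sum_distrib_left)
    also have "\<dots> = real k * (4 * (\<Sum>u<n. d u * SZ u) + 2 * real m)"
      unfolding d_def sum_edge_endpoints[symmetric]
      by (simp add: sum.distrib mult.commute[of _ "real m"] flip: sum_distrib_left sum_distrib_right)
    finally show ?thesis
      unfolding sum_distrib_left[symmetric] by (simp add: algebra_simps)
  qed
  also have "(\<Sum>u<n. d u * SZ u) = (\<Sum>a<n. \<Sum>b<n. d a * d b * Z a b)"
    unfolding SZ_def by (simp add: sum_distrib_left mult_ac)
  finally show ?thesis
    unfolding d_def .
qed

lemma kf_star_subdiv_green:
  "kf_star (N, EH) = 8 * real k * kf_star (n, E) + 2 * real k * real m
     - 4 * real k * real m * real n + 4 * real k ^ 2 * real m ^ 2"
  unfolding H.kf_star_grounded_green[OF grounded_green_lift] kf_star_grounded_green[OF green]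
    sum_deg_subdiv sum_deg_diag_lift_green sum_deg_deg_lift_green handshake
  by (simp add: power2_eq_square algebra_simps)

end

context parallel_subdivision
begin

lemma kf_star_subdiv:
  "kf_star (N, EH) = 8 * real k * kf_star (n, E) + 2 * real k * real m
     - 4 * real k * real m * real n + 4 * real k ^ 2 * real m ^ 2"
proof -
  obtain Z where "grounded_green (n, E) Z"
    using grounded_green_exists by blast
  then interpret subdivision_green n E k Z
    by unfold_locales
  show ?thesis
    by (rule kf_star_subdiv_green)
qed

end

section \<open>Iterating the subdivision\<close>

lemma
  assumes "simple_graph G" "connected_graph G" "0 < k"
  shows simple_graph_par_subdiv: "simple_graph (par_subdiv k G)"
    and connected_graph_par_subdiv: "connected_graph (par_subdiv k G)"
    and fst_par_subdiv: "fst (par_subdiv k G) = fst G + k * num_edges G"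
    and num_edges_par_subdiv: "num_edges (par_subdiv k G) = 2 * k * num_edges G"
    and kf_star_par_subdiv: "kf_star (par_subdiv k G) = 8 * real k * kf_star G
      + 2 * real k * real (num_edges G) - 4 * real k * real (num_edges G) * real (fst G)
      + 4 * real k ^ 2 * real (num_edges G) ^ 2"
proof -
  obtain n E where G: "G = (n, E)"
    by fastforce
  interpret parallel_subdivision n E k
    using assms unfolding G
    by (intro parallel_subdivision.intro connected_simple_graph.intro finite_simple_graph.intro
        connected_simple_graph_axioms.intro parallel_subdivision_axioms.intro)
  have m: "num_edges G = m"
    unfolding G num_edges_def m_eq_card by simp
  show "simple_graph (par_subdiv k G)" "connected_graph (par_subdiv k G)"
    unfolding G par_subdiv_eq by (fact simple_graph_subdiv connected_graph_subdiv)+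
  show "fst (par_subdiv k G) = fst G + k * num_edges G"
    unfolding m unfolding G par_subdiv_eq by (simp add: N_def)
  show "num_edges (par_subdiv k G) = 2 * k * num_edges G"
    unfolding m unfolding G par_subdiv_eq num_edges_def by (simp add: num_edges_subdiv)
  show "kf_star (par_subdiv k G) = 8 * real k * kf_star G
      + 2 * real k * real (num_edges G) - 4 * real k * real (num_edges G) * real (fst G)
      + 4 * real k ^ 2 * real (num_edges G) ^ 2"
    unfolding m unfolding G par_subdiv_eq by (simp add: kf_star_subdiv)
qed

lemma
  assumes "simple_graph G" "connected_graph G" "0 < k"
  shows simple_graph_iterated_par_subdiv: "simple_graph ((par_subdiv k ^^ r) G)"
    and connected_graph_iterated_par_subdiv: "connected_graph ((par_subdiv k ^^ r) G)"
  by (induction r) (simp_all add: assms simple_graph_par_subdiv connected_graph_par_subdiv)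

lemma num_edges_iterated_par_subdiv:
  assumes "simple_graph G" "connected_graph G" "0 < k"
  shows "num_edges ((par_subdiv k ^^ r) G) = (2 * k) ^ r * num_edges G"
  by (induction r)
    (simp_all add: assms num_edges_par_subdiv simple_graph_iterated_par_subdiv connected_graph_iterated_par_subdiv)

lemma fst_iterated_par_subdiv:
  assumes "simple_graph G" "connected_graph G" "0 < k"
  shows "real (fst ((par_subdiv k ^^ r) G))
    = real (fst G) + real k * real (num_edges G) * ((2 * real k) ^ r - 1) / (2 * real k - 1)"
proof (induction r)
  case (Suc r)
  have "2 * real k - 1 \<noteq> 0"
    using assms(3) by simp
  with Suc show ?case
    using assms by (simp add: fst_par_subdiv num_edges_iterated_par_subdiv
        simple_graph_iterated_par_subdiv connected_graph_iterated_par_subdiv field_simps)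
qed simp

definition kf_closed_form :: "real \<Rightarrow> real \<Rightarrow> real \<Rightarrow> real \<Rightarrow> nat \<Rightarrow> real" where
  "kf_closed_form k n m K r =
      (8 * k) ^ r * K
    + (2 * k) ^ r * (4 ^ r - 1) / 3 * (m - 2 * m * n)
    + k * (4 * k) ^ r * (k ^ r - 2 ^ r) / (k - 2) * m ^ 2
    - k * (2 * k) ^ r * (4 ^ r - 2 * k * (4 ^ r - 1) + 3 * (2 * k) ^ r - 4)
        / (3 * (k - 2) * (2 * k - 1)) * m ^ 2"

lemma kf_closed_form_Suc:
  fixes k n m K :: real
  assumes "k > 2"
  shows "kf_closed_form k n m K (Suc r) = 8 * k * kf_closed_form k n m K r
    + 2 * k * ((2 * k) ^ r * m)
    - 4 * k * ((2 * k) ^ r * m) * (n + k * m * ((2 * k) ^ r - 1) / (2 * k - 1))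
    + 4 * k ^ 2 * ((2 * k) ^ r * m) ^ 2"
proof -
  have pow: "(8::real) ^ r = (2 ^ r) ^ 3" "(4::real) ^ r = (2 ^ r) ^ 2"
    by (simp_all add: power2_eq_square power3_eq_cube flip: power_mult_distrib)
  have "k - 2 \<noteq> 0" "2 * k - 1 \<noteq> 0"
    using assms by auto
  then show ?thesis
    unfolding kf_closed_form_def power_Suc power_mult_distrib pow
    by (simp add: divide_simps) (simp add: algebra_simps power2_eq_square power3_eq_cube)
qed

lemma kf_star_iterated_par_subdiv:
  assumes G: "simple_graph G" "connected_graph G" and "k > 2"
  shows "kf_star ((par_subdiv k ^^ r) G)
    = kf_closed_form (real k) (real (fst G)) (real (num_edges G)) (kf_star G) r"
proof (induction r)
  case 0
  show ?case
    by (simp add: kf_closed_form_def)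
next
  case (Suc r)
  have "0 < k"
    using \<open>k > 2\<close> by simp
  note iterated = simple_graph_iterated_par_subdiv[OF G \<open>0 < k\<close>]
    connected_graph_iterated_par_subdiv[OF G \<open>0 < k\<close>]
    num_edges_iterated_par_subdiv[OF G \<open>0 < k\<close>] fst_iterated_par_subdiv[OF G \<open>0 < k\<close>]
  show ?case
    using kf_star_par_subdiv[OF iterated(1,2) \<open>0 < k\<close>, of r] \<open>k > 2\<close>
    by (simp add: Suc.IH kf_closed_form_Suc iterated(3,4))
qed

theorem theorem4p6:
  fixes G :: graph and k r :: nat
  assumes "simple_graph G" and "connected_graph G" and "k > 2" and "r \<ge> 1"
  shows "kf_star ((par_subdiv k ^^ r) G) =
      (8 * real k) ^ r * kf_star G
    + (2 * real k) ^ r * (4 ^ r - 1) / 3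
        * (real (num_edges G) - 2 * real (num_edges G) * real (fst G))
    + real k * (4 * real k) ^ r * (real k ^ r - 2 ^ r) / (real k - 2) * real (num_edges G) ^ 2
    - real k * (2 * real k) ^ r * (4 ^ r - 2 * real k * (4 ^ r - 1) + 3 * (2 * real k) ^ r - 4)
        / (3 * (real k - 2) * (2 * real k - 1)) * real (num_edges G) ^ 2"
proof -
  have "kf_star ((par_subdiv k ^^ r) G)
      = kf_closed_form (real k) (real (fst G)) (real (num_edges G)) (kf_star G) r"
    using assms(1-3) by (rule kf_star_iterated_par_subdiv)
  then show ?thesis
    unfolding kf_closed_form_def .
qed

end
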